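(* Let $Z\sim N(0,1)$ and let $X=aZ^2+bZ+c$, where $a,b,c\in\mathbb{R}$. Let $(\alpha,\beta)\subseteq\mathbb{R}$ denote the range of the quadratic $x\mapsto ax^2+bx+c$, and let $f$ be twice differentiable on $(\alpha,\beta)$. Suppose further that $\mathbb{E}|Xf^{(k)}(X)|<\infty$ and $\mathbb{E}|f^{(k)}(X)|<\infty$ for all $k=0,1,2$. Then $$\mathbb{E}\big[(ab^2+4a^2(X-c))f''(X)+(2a^2-b^2-4a(X-c))f'(X)+(X-c-a)f(X)\big]=0.$$
   Context: $f^{(0)}\equiv f$, and $f^{(k)}$ denotes the $k$-th derivative of $f$. *)

theory Defs
  imports "HOL-Probability.Probability"
begin

definition twice_differentiable_on :: "(real \<Rightarrow> real) \<Rightarrow> real set \<Rightarrow> bool" where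
  "twice_differentiable_on f S \<longleftrightarrow>
     (\<forall>x\<in>S. f differentiable (at x) \<and> deriv f differentiable (at x))"

end

theory Submission
  imports Defs
begin

text \<open>
  Write \<open>X = q(Z)\<close> with \<open>q x = a x\<^sup>2 + b x + c\<close>. Gaussian integration by parts,
  \<open>E[Z h(Z)] = E[h'(Z)]\<close>, applied to \<open>h = q' (f \<circ> q)\<close>, \<open>h = f \<circ> q\<close> and
  \<open>h = q' (f' \<circ> q)\<close> gives three identities; half of the first, plus \<open>b\<close> times the second,
  minus \<open>2 a\<close> times the third is the claim, because \<open>q'\<^sup>2 = 4 a (q - c) + b\<^sup>2\<close>.

  The difficulty is that \<open>f\<close> is only differentiable on the interior of the range of \<open>q\<close>,
  so \<open>h\<close> may be singular at the vertex \<open>p\<close> of the parabola. Integrating by parts on each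
  side of \<open>p\<close> separately, integrability alone makes \<open>h\<close> have one-sided limits at \<open>p\<close>,
  and no boundary term survives: \<open>f \<circ> q\<close> is symmetric about \<open>p\<close>, while
  \<open>q' (G \<circ> q) = 2 a (z - p) G (q z)\<close> (for \<open>G = f, f'\<close>) is antisymmetric, and its limit must be \<open>0\<close>
  because a function growing like \<open>1 / (z - p)\<close> is not integrable.
\<close>

section \<open>Integrals and limits on half-lines\<close>

lemma set_integral_Icc_eq_diff:
  fixes F g :: "real \<Rightarrow> real"
  assumes "u \<le> v" "\<And>z. z \<in> {u..v} \<Longrightarrow> (F has_real_derivative g z) (at z)"
    and "set_integrable lborel {u..v} g"
  shows "(LBINT z:{u..v}. g z) = F v - F u"
proof -
  have "(g has_integral F v - F u) {u..v}"
    using assms(1,2) by (intro fundamental_theorem_of_calculus)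
      (auto simp: has_real_derivative_iff_has_vector_derivative[symmetric] intro: has_field_derivative_at_within)
  then show ?thesis
    using set_borel_integral_eq_integral(2)[OF assms(3)] by (simp add: integral_unique)
qed

lemma set_integral_abs_mono_set:
  fixes f :: "'a \<Rightarrow> real"
  assumes int: "set_integrable M B f" and "A \<in> sets M" "A \<subseteq> B"
  shows "(LINT x:A|M. \<bar>f x\<bar>) \<le> (LINT x:B|M. \<bar>f x\<bar>)"
  unfolding set_lebesgue_integral_def
proof (rule integral_mono)
  have "set_integrable M B (\<lambda>x. \<bar>f x\<bar>)"
    using int by (rule set_integrable_abs)
  moreover from this have "set_integrable M A (\<lambda>x. \<bar>f x\<bar>)"
    using assms(2,3) by (rule set_integrable_subset)
  ultimately show "integrable M (\<lambda>x. indicator A x *\<^sub>R \<bar>f x\<bar>)"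
    and "integrable M (\<lambda>x. indicator B x *\<^sub>R \<bar>f x\<bar>)"
    by (simp_all add: set_integrable_def)
  show "indicator A x *\<^sub>R \<bar>f x\<bar> \<le> indicator B x *\<^sub>R \<bar>f x\<bar>" for x
    using \<open>A \<subseteq> B\<close> by (auto simp: indicator_def)
qed

lemma tendsto_at_top_eq_0_if_set_integrable:
  fixes F :: "real \<Rightarrow> real"
  assumes lim: "(F \<longlongrightarrow> R) at_top" and int: "set_integrable lborel {s..} F"
  shows "R = 0"
proof (rule ccontr)
  assume "R \<noteq> 0"
  then have "\<forall>\<^sub>F v in at_top. \<bar>R\<bar> / 2 < \<bar>F v\<bar>"
    by (intro order_tendstoD(1)[OF tendsto_rabs[OF lim]]) simp
  then obtain T where T: "\<And>v. v \<ge> T \<Longrightarrow> \<bar>R\<bar> / 2 < \<bar>F v\<bar>" and "T \<ge> s"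
    unfolding eventually_at_top_linorder by (metis max.cobounded1 max.cobounded2 order.trans)
  define C where "C = (LBINT z:{s..}. \<bar>F z\<bar>)"
  define N where "N = 2 * C / \<bar>R\<bar> + 1"
  have "C \<ge> 0"
    unfolding C_def set_lebesgue_integral_def by (intro integral_nonneg_AE) (auto simp: indicator_def)
  then have "N > 0"
    using \<open>R \<noteq> 0\<close> by (simp add: N_def add_nonneg_pos)
  have sub: "{T..T + N} \<subseteq> {s..}"
    using \<open>T \<ge> s\<close> by auto
  have int_abs: "set_integrable lborel {T..T + N} (\<lambda>z. \<bar>F z\<bar>)"
    using set_integrable_subset[OF set_integrable_abs[OF int] _ sub] by simp
  have "\<bar>R\<bar> / 2 * N = (LBINT z:{T..T + N}. \<bar>R\<bar> / 2)"
    using \<open>N > 0\<close> by (simp add: set_integral_const)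
  also have "\<dots> \<le> (LBINT z:{T..T + N}. \<bar>F z\<bar>)"
  proof (rule set_integral_mono[OF _ int_abs])
    show "set_integrable lborel {T..T + N} (\<lambda>z. \<bar>R\<bar> / 2)"
      by (rule borel_integrable_atLeastAtMost') simp
    show "\<bar>R\<bar> / 2 \<le> \<bar>F z\<bar>" if "z \<in> {T..T + N}" for z
      using T that by (simp add: less_imp_le)
  qed
  also have "\<dots> \<le> C"
    unfolding C_def using int _ sub by (rule set_integral_abs_mono_set) simp
  finally have "\<bar>R\<bar> / 2 * N \<le> C" .
  moreover have "\<bar>R\<bar> / 2 * N = C + \<bar>R\<bar> / 2"
    using \<open>R \<noteq> 0\<close> by (simp add: N_def field_simps)
  ultimately show False
    using \<open>R \<noteq> 0\<close> by simp
qed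

lemma set_integral_Ici_eq_neg:
  fixes F g :: "real \<Rightarrow> real"
  assumes der: "\<And>z. z \<ge> s \<Longrightarrow> (F has_real_derivative g z) (at z)"
    and int_g: "set_integrable lborel {s..} g" and int_F: "set_integrable lborel {s..} F"
  shows "(LBINT z:{s..}. g z) = - F s"
proof -
  have ftc: "(LBINT z:{s..v}. g z) = F v - F s" if "s \<le> v" for v
    using that by (intro set_integral_Icc_eq_diff der set_integrable_subset[OF int_g]) auto
  have "((\<lambda>v. F s + (LBINT z:{s..v}. g z)) \<longlongrightarrow> F s + (LBINT z:{s..}. g z)) at_top"
    using int_g by (intro tendsto_add tendsto_const tendsto_set_lebesgue_integral_at_top) auto
  moreover have "\<forall>\<^sub>F v in at_top. F s + (LBINT z:{s..v}. g z) = F v"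
    using eventually_ge_at_top[of s] by eventually_elim (simp add: ftc)
  ultimately have "(F \<longlongrightarrow> F s + (LBINT z:{s..}. g z)) at_top"
    by (rule Lim_transform_eventually)
  then have "F s + (LBINT z:{s..}. g z) = 0"
    using int_F by (rule tendsto_at_top_eq_0_if_set_integrable)
  then show ?thesis
    by simp
qed

lemma tendsto_at_right_set_integral_Ioi:
  fixes F g :: "real \<Rightarrow> real"
  assumes der: "\<And>z. z > p \<Longrightarrow> (F has_real_derivative g z) (at z)"
    and int_g: "set_integrable lborel {p<..} g" and int_F: "set_integrable lborel {p<..} F"
  shows "(F \<longlongrightarrow> - (LBINT z:{p<..}. g z)) (at_right p)"
proof -
  define s where "s = p + 1"
  have "p < s"
    by (simp add: s_def)
  have ftc: "(LBINT z:{u..s}. g z) = F s - F u" if "p < u" "u \<le> s" for u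
    using that by (intro set_integral_Icc_eq_diff der set_integrable_subset[OF int_g]) auto
  have "((\<lambda>u. F s - (LBINT z:{u..s}. g z)) \<longlongrightarrow> F s - (LBINT z:{p<..s}. g z)) (at_right p)"
    by (intro tendsto_diff tendsto_const tendsto_set_lebesgue_integral_at_right
        set_integrable_subset[OF int_g]) (auto simp: s_def)
  moreover have "\<forall>\<^sub>F u in at_right p. F s - (LBINT z:{u..s}. g z) = F u"
    using \<open>p < s\<close> by (intro eventually_at_rightI[of p s]) (simp_all add: ftc)
  ultimately have lim: "(F \<longlongrightarrow> F s - (LBINT z:{p<..s}. g z)) (at_right p)"
    by (rule Lim_transform_eventually)
  have "(LBINT z:{s..}. g z) = - F s"
    using der by (intro set_integral_Ici_eq_neg set_integrable_subset[OF int_g] set_integrable_subset[OF int_F])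
      (auto simp: s_def)
  moreover have "(LBINT z:{p<..}. g z) = (LBINT z:{p<..s}. g z) + (LBINT z:{s..}. g z)"
  proof -
    have split: "{p<..} = {p<..s} \<union> {s..}"
      by (auto simp: s_def)
    have "AE z in lborel. \<not> (z \<in> {p<..s} \<and> z \<in> {s..})"
      using AE_lborel_singleton[of s] by eventually_elim auto
    then show ?thesis
      unfolding split
      by (intro set_integral_Un_AE set_integrable_subset[OF int_g]) (auto simp: s_def)
  qed
  ultimately show ?thesis
    using lim by simp
qed

lemma set_integrable_Iio_iff_reflect:
  fixes f :: "real \<Rightarrow> real"
  shows "set_integrable lborel {..<p} f \<longleftrightarrow> set_integrable lborel {-p<..} (\<lambda>x. f (- x))"
proof -
  have "indicator {..<p} (- x) = (indicator {-p<..} x :: real)" for x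
    by (auto simp: indicator_def)
  then show ?thesis
    unfolding set_integrable_def
    using lborel_integrable_real_affine_iff[of "-1" "\<lambda>x. indicator {..<p} x *\<^sub>R f x" 0] by simp
qed

lemma set_integral_Iio_reflect:
  fixes f :: "real \<Rightarrow> real"
  shows "(LBINT x:{..<p}. f x) = (LBINT x:{-p<..}. f (- x))"
proof -
  have "indicator {..<p} (- x) = (indicator {-p<..} x :: real)" for x
    by (auto simp: indicator_def)
  then show ?thesis
    unfolding set_lebesgue_integral_def
    using lborel_integral_real_affine[of "-1" "\<lambda>x. indicator {..<p} x *\<^sub>R f x" 0] by simp
qed

lemma tendsto_at_left_set_integral_Iio:
  fixes F g :: "real \<Rightarrow> real"
  assumes der: "\<And>z. z < p \<Longrightarrow> (F has_real_derivative g z) (at z)"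
    and int_g: "set_integrable lborel {..<p} g" and int_F: "set_integrable lborel {..<p} F"
  shows "(F \<longlongrightarrow> (LBINT z:{..<p}. g z)) (at_left p)"
proof -
  have int_g': "set_integrable lborel {-p<..} (\<lambda>z. g (- z))"
    using int_g by (simp add: set_integrable_Iio_iff_reflect)
  have "((\<lambda>x. F (- x)) \<longlongrightarrow> - (LBINT z:{-p<..}. - g (- z))) (at_right (- p))"
  proof (rule tendsto_at_right_set_integral_Ioi)
    show "((\<lambda>x. F (- x)) has_real_derivative - g (- z)) (at z)" if "z > - p" for z
      using der[of "- z"] that by (simp add: DERIV_mirror)
    show "set_integrable lborel {-p<..} (\<lambda>z. - g (- z))"
      using int_g' by (simp add: set_integrable_def)
    show "set_integrable lborel {-p<..} (\<lambda>z. F (- z))"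
      using int_F by (simp add: set_integrable_Iio_iff_reflect)
  qed
  moreover have "- (LBINT z:{-p<..}. - g (- z)) = (LBINT z:{..<p}. g z)"
    using int_g' by (simp add: set_integral_uminus set_integral_Iio_reflect)
  ultimately show ?thesis
    unfolding filterlim_at_left_to_right[of F] by simp
qed

lemma set_integral_Icc_inverse:
  fixes p r :: real
  assumes "0 < e" "e \<le> d"
  shows "set_integrable lborel {p + e..p + d} (\<lambda>z. r / (z - p))"
    and "(LBINT z:{p + e..p + d}. r / (z - p)) = r * (ln d - ln e)"
proof -
  have pos: "z - p > 0" if "z \<in> {p + e..p + d}" for z
    using that \<open>0 < e\<close> by auto
  show int: "set_integrable lborel {p + e..p + d} (\<lambda>z. r / (z - p))"
    using pos by (intro borel_integrable_atLeastAtMost' continuous_intros) fastforce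
  have "(LBINT z:{p + e..p + d}. r / (z - p)) = r * ln ((p + d) - p) - r * ln ((p + e) - p)"
    using assms pos int by (intro set_integral_Icc_eq_diff) (auto intro!: derivative_eq_intros)
  then show "(LBINT z:{p + e..p + d}. r / (z - p)) = r * (ln d - ln e)"
    by (simp add: algebra_simps)
qed

lemma tendsto_at_right_times_diff_eq_0_if_integrable:
  fixes u :: "real \<Rightarrow> real"
  assumes lim: "((\<lambda>z. (z - p) * u z) \<longlongrightarrow> l) (at_right p)" and int: "integrable lborel u"
  shows "l = 0"
proof (rule ccontr)
  assume "l \<noteq> 0"
  define r where "r = \<bar>l\<bar> / 2"
  have "r > 0"
    using \<open>l \<noteq> 0\<close> by (simp add: r_def)
  have "\<forall>\<^sub>F z in at_right p. r < \<bar>(z - p) * u z\<bar>"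
    unfolding r_def using \<open>l \<noteq> 0\<close> by (intro order_tendstoD(1)[OF tendsto_rabs[OF lim]]) simp
  then obtain b where "b > p" and b: "\<And>z. p < z \<Longrightarrow> z < b \<Longrightarrow> r < \<bar>(z - p) * u z\<bar>"
    unfolding eventually_at_right[OF less_add_one[of p]] by blast
  define C where "C = (LBINT z:UNIV. \<bar>u z\<bar>)"
  define d where "d = (b - p) / 2"
  define e where "e = d * exp (- C / r - 1)"
  have "d > 0" "e > 0"
    using \<open>b > p\<close> by (simp_all add: d_def e_def)
  have "C / r \<ge> 0"
    using \<open>r > 0\<close> unfolding C_def set_lebesgue_integral_def by simp
  then have "exp (- C / r - 1) < 1"
    by simp
  with \<open>d > 0\<close> have "e < d"
    by (simp add: e_def)
  have int_abs: "set_integrable lborel {p + e..p + d} (\<lambda>z. \<bar>u z\<bar>)"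
    using int unfolding set_integrable_def by (intro integrable_mult_indicator integrable_abs) auto
  have "C + r = r * (ln d - ln e)"
    using \<open>d > 0\<close> \<open>r > 0\<close> by (simp add: e_def ln_mult field_simps)
  also have "\<dots> = (LBINT z:{p + e..p + d}. r / (z - p))"
    using \<open>e > 0\<close> \<open>e < d\<close> by (simp add: set_integral_Icc_inverse)
  also have "\<dots> \<le> (LBINT z:{p + e..p + d}. \<bar>u z\<bar>)"
  proof (rule set_integral_mono[OF set_integral_Icc_inverse(1) int_abs])
    fix z assume z: "z \<in> {p + e..p + d}"
    then have "z - p > 0" "z < b"
      using \<open>e > 0\<close> \<open>b > p\<close> by (auto simp: d_def field_simps)
    then have "r < (z - p) * \<bar>u z\<bar>"
      using b[of z] by (simp add: abs_mult)
    then show "r / (z - p) \<le> \<bar>u z\<bar>"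
      using \<open>z - p > 0\<close> by (simp add: field_simps)
  qed (use \<open>e > 0\<close> \<open>e < d\<close> in auto)
  also have "\<dots> \<le> C"
    unfolding C_def using int by (intro set_integral_abs_mono_set) (auto simp: set_integrable_def)
  finally show False
    using \<open>r > 0\<close> by simp
qed

section \<open>Stein's identity off a point\<close>

lemma integral_split_at_point:
  fixes g :: "real \<Rightarrow> real"
  assumes "integrable lborel g"
  shows "(\<integral>z. g z \<partial>lborel) = (LBINT z:{..<p}. g z) + (LBINT z:{p<..}. g z)"
proof -
  have "(\<integral>z. g z \<partial>lborel) = (LBINT z:UNIV. g z)"
    using set_integral_space[OF assms] by simp
  also have "\<dots> = (LBINT z:{..<p} \<union> {p<..}. g z)"
    using AE_lborel_singleton[of p] borel_measurable_integrable[OF assms]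
    by (intro set_integral_cong_set) (auto simp: set_borel_measurable_def)
  also have "\<dots> = (LBINT z:{..<p}. g z) + (LBINT z:{p<..}. g z)"
    using integrable_mult_indicator[OF _ assms, of "{..<p}"] integrable_mult_indicator[OF _ assms, of "{p<..}"]
    by (intro set_integral_Un) (auto simp: set_integrable_def)
  finally show ?thesis .
qed

abbreviation \<phi> :: "real \<Rightarrow> real" where
  "\<phi> \<equiv> std_normal_density"

lemma has_real_derivative_std_normal_density: "(\<phi> has_real_derivative - z * \<phi> z) (at z)"
proof -
  define c where "c = 1 / sqrt (2 * pi)"
  have "\<phi> = (\<lambda>x. c * exp (- x\<^sup>2 / 2))"
    by (simp add: fun_eq_iff std_normal_density_def c_def)
  then show ?thesis
    by (auto intro!: derivative_eq_intros)
qed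

lemma std_normal_density_pos: "\<phi> z > 0"
  by (simp add: normal_density_pos)

lemma tendsto_std_normal_density: "(\<phi> \<longlongrightarrow> \<phi> p) (at p within S)"
  using DERIV_isCont[OF has_real_derivative_std_normal_density]
  by (simp add: isCont_def tendsto_within_subset[OF _ subset_UNIV])

lemma std_normal_stein_identity_off_point:
  fixes h h' :: "real \<Rightarrow> real"
  assumes der: "\<And>z. z \<noteq> p \<Longrightarrow> (h has_real_derivative h' z) (at z)"
    and int_h: "integrable lborel (\<lambda>z. \<phi> z * h z)"
    and int_zh: "integrable lborel (\<lambda>z. \<phi> z * (z * h z))"
    and int_h': "integrable lborel (\<lambda>z. \<phi> z * h' z)"
    and jump: "\<And>L L'. (h \<longlongrightarrow> L) (at_left p) \<Longrightarrow> (h \<longlongrightarrow> L') (at_right p) \<Longrightarrow> L = L'"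
  shows "has_bochner_integral lborel (\<lambda>z. \<phi> z * (z * h z - h' z)) 0"
proof -
  define F where "F z = \<phi> z * h z" for z
  define g where "g z = \<phi> z * h' z - \<phi> z * (z * h z)" for z
  have der_F: "(F has_real_derivative g z) (at z)" if "z \<noteq> p" for z
    unfolding F_def g_def
    by (rule derivative_eq_intros has_real_derivative_std_normal_density der[OF that] refl)+
      (simp add: algebra_simps)
  have int_g: "integrable lborel g"
    unfolding g_def using int_h' int_zh by simp
  have set_int: "set_integrable lborel A g" "set_integrable lborel A F" if "A \<in> sets borel" for A
    using integrable_mult_indicator[OF _ int_g, of A] integrable_mult_indicator[OF _ int_h, of A] that
    by (simp_all add: set_integrable_def F_def)
  have lim_left: "(F \<longlongrightarrow> (LBINT z:{..<p}. g z)) (at_left p)"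
    using der_F set_int by (intro tendsto_at_left_set_integral_Iio) auto
  have lim_right: "(F \<longlongrightarrow> - (LBINT z:{p<..}. g z)) (at_right p)"
    using der_F set_int by (intro tendsto_at_right_set_integral_Ioi) auto
  have h_eq: "h = (\<lambda>z. F z / \<phi> z)"
    using std_normal_density_pos by (simp add: F_def fun_eq_iff less_imp_neq[symmetric])
  have "(h \<longlongrightarrow> (LBINT z:{..<p}. g z) / \<phi> p) (at_left p)"
    unfolding h_eq using std_normal_density_pos[of p]
    by (intro tendsto_divide lim_left tendsto_std_normal_density) auto
  moreover have "(h \<longlongrightarrow> (- (LBINT z:{p<..}. g z)) / \<phi> p) (at_right p)"
    unfolding h_eq using std_normal_density_pos[of p]
    by (intro tendsto_divide lim_right tendsto_std_normal_density) auto
  ultimately have "(LBINT z:{..<p}. g z) / \<phi> p = (- (LBINT z:{p<..}. g z)) / \<phi> p"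
    by (rule jump)
  then have "(\<integral>z. g z \<partial>lborel) = 0"
    using std_normal_density_pos[of p] by (simp add: integral_split_at_point[OF int_g, of p] field_simps)
  then have "has_bochner_integral lborel g 0"
    using int_g by (simp add: has_bochner_integral_iff)
  then show ?thesis
    using has_bochner_integral_minus[of lborel g 0] by (simp add: g_def algebra_simps)
qed

lemma filterlim_reflect_at_right_at_left: "filterlim (\<lambda>z. 2 * p - z) (at_left p) (at_right (p::real))"
  unfolding filterlim_at
proof
  show "\<forall>\<^sub>F z in at_right p. 2 * p - z \<in> {..<p} \<and> 2 * p - z \<noteq> p"
    using eventually_at_right_less[of p] by eventually_elim auto
  have "((\<lambda>z. 2 * p - z) \<longlongrightarrow> 2 * p - p) (at_right p)"
    by (intro tendsto_intros)
  then show "((\<lambda>z. 2 * p - z) \<longlongrightarrow> p) (at_right p)"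
    by simp
qed

lemma one_sided_limits_eq_if_isCont:
  fixes h :: "real \<Rightarrow> 'a::t2_space"
  assumes "isCont h p" "(h \<longlongrightarrow> L) (at_left p)" "(h \<longlongrightarrow> L') (at_right p)"
  shows "L = L'"
proof -
  have "(h \<longlongrightarrow> h p) (at_left p)" "(h \<longlongrightarrow> h p) (at_right p)"
    using assms(1) by (simp_all add: isCont_def filterlim_at_split)
  then show ?thesis
    using assms(2,3) tendsto_unique[OF trivial_limit_at_left_real] tendsto_unique[OF trivial_limit_at_right_real]
    by metis
qed

lemma one_sided_limits_eq_if_symmetric:
  fixes h :: "real \<Rightarrow> 'a::t2_space"
  assumes sym: "\<And>z. h (2 * p - z) = h z"
    and "(h \<longlongrightarrow> L) (at_left p)" "(h \<longlongrightarrow> L') (at_right p)"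
  shows "L = L'"
proof -
  have "((\<lambda>z. h (2 * p - z)) \<longlongrightarrow> L) (at_right p)"
    using assms(2) filterlim_reflect_at_right_at_left by (rule filterlim_compose)
  then show ?thesis
    using assms(3) by (simp add: sym tendsto_unique[OF trivial_limit_at_right_real])
qed

lemma one_sided_limits_eq_if_antisymmetric:
  fixes h v :: "real \<Rightarrow> real"
  assumes h: "\<And>z. h z = (z - p) * v z" and sym: "\<And>z. v (2 * p - z) = v z"
    and int: "integrable lborel (\<lambda>z. \<phi> z * v z)"
    and L: "(h \<longlongrightarrow> L) (at_left p)" and L': "(h \<longlongrightarrow> L') (at_right p)"
  shows "L = L'"
proof -
  have "((\<lambda>z. h z * \<phi> z) \<longlongrightarrow> L' * \<phi> p) (at_right p)"
    using L' tendsto_std_normal_density by (rule tendsto_mult)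
  moreover have "(\<lambda>z. h z * \<phi> z) = (\<lambda>z. (z - p) * (\<phi> z * v z))"
    by (simp add: h fun_eq_iff ac_simps)
  ultimately have "((\<lambda>z. (z - p) * (\<phi> z * v z)) \<longlongrightarrow> L' * \<phi> p) (at_right p)"
    by simp
  then have "L' * \<phi> p = 0"
    using int by (rule tendsto_at_right_times_diff_eq_0_if_integrable)
  then have "L' = 0"
    using std_normal_density_pos[of p] by simp
  have "((\<lambda>z. h (2 * p - z)) \<longlongrightarrow> L) (at_right p)"
    using L filterlim_reflect_at_right_at_left by (rule filterlim_compose)
  moreover have "h (2 * p - z) = - h z" for z
    unfolding h sym by (simp add: algebra_simps)
  ultimately have "((\<lambda>z. - h z) \<longlongrightarrow> L) (at_right p)"
    by simp
  then have "(h \<longlongrightarrow> - L) (at_right p)"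
    using tendsto_minus[of "\<lambda>z. - h z" L] by simp
  then have "- L = L'"
    using L' by (rule tendsto_unique[OF trivial_limit_at_right_real])
  with \<open>L' = 0\<close> show ?thesis
    by simp
qed

section \<open>Range and measurability of derivatives\<close>

lemma interior_range_if_has_real_derivative_nonzero:
  fixes q :: "real \<Rightarrow> real"
  assumes cont: "continuous_on UNIV q" and der: "(q has_real_derivative d) (at z)" and "d \<noteq> 0"
  shows "q z \<in> interior (range q)"
proof -
  obtain y y' where "y \<in> range q" "y' \<in> range q" "y < q z" "q z < y'"
  proof (cases "d > 0")
    case True
    obtain e where "e > 0" and e: "\<And>h. 0 < h \<Longrightarrow> h < e \<Longrightarrow> q z < q (z + h)"
      using DERIV_pos_inc_right[OF der True] by blast
    obtain e' where "e' > 0" and e': "\<And>h. 0 < h \<Longrightarrow> h < e' \<Longrightarrow> q (z - h) < q z"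
      using DERIV_pos_inc_left[OF der True] by blast
    show ?thesis
      using e[of "e / 2"] e'[of "e' / 2"] \<open>e > 0\<close> \<open>e' > 0\<close>
      by (intro that[of "q (z - e' / 2)" "q (z + e / 2)"]) simp_all
  next
    case False
    with \<open>d \<noteq> 0\<close> have "d < 0"
      by simp
    obtain e where "e > 0" and e: "\<And>h. 0 < h \<Longrightarrow> h < e \<Longrightarrow> q (z + h) < q z"
      using DERIV_neg_dec_right[OF der \<open>d < 0\<close>] by blast
    obtain e' where "e' > 0" and e': "\<And>h. 0 < h \<Longrightarrow> h < e' \<Longrightarrow> q z < q (z - h)"
      using DERIV_neg_dec_left[OF der \<open>d < 0\<close>] by blast
    show ?thesis
      using e[of "e / 2"] e'[of "e' / 2"] \<open>e > 0\<close> \<open>e' > 0\<close>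
      by (intro that[of "q (z + e / 2)" "q (z - e' / 2)"]) simp_all
  qed
  have "connected (range q)"
    using cont by (rule connected_continuous_image[OF _ connected_UNIV])
  then have "{y<..<y'} \<subseteq> range q"
    using connectedD_interval[of "range q" y y'] \<open>y \<in> range q\<close> \<open>y' \<in> range q\<close>
    by (simp add: subset_eq)
  then have "{y<..<y'} \<subseteq> interior (range q)"
    by (simp add: interior_maximal)
  with \<open>y < q z\<close> \<open>q z < y'\<close> show ?thesis
    by auto
qed

lemma borel_measurable_indicator_times_derivative:
  fixes F F' :: "real \<Rightarrow> real"
  assumes "open U" and der: "\<And>y. y \<in> U \<Longrightarrow> (F has_real_derivative F' y) (at y)"
  shows "(\<lambda>y. indicator U y * F' y) \<in> borel_measurable borel"
proof (rule borel_measurable_LIMSEQ_real)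
  define t where "t n = inverse (real (Suc n))" for n
  define V where "V n = U \<inter> (\<lambda>y. y + t n) -` U" for n
  define D where "D n y = indicator (V n) y * ((F (y + t n) - F y) / t n)" for n y
  have open_V: "open (V n)" for n
    unfolding V_def using \<open>open U\<close> by (intro open_Int open_vimage continuous_intros) auto
  have cont_V: "continuous_on (V n) (\<lambda>y. (F (y + t n) - F y) / t n)" for n
  proof (intro continuous_at_imp_continuous_on ballI)
    fix y assume "y \<in> V n"
    then have "isCont F y" "isCont F (y + t n)"
      using der DERIV_isCont by (auto simp: V_def)
    moreover have "isCont (\<lambda>y. F (y + t n)) y"
      using isCont_o2[where f = "\<lambda>y. y + t n" and g = F and a = y] \<open>isCont F (y + t n)\<close> by simp
    ultimately show "isCont (\<lambda>y. (F (y + t n) - F y) / t n) y"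
      by (intro continuous_intros) (auto simp: t_def)
  qed
  show "D n \<in> borel_measurable borel" for n
    using borel_measurable_continuous_on_indicator[OF borel_open[OF open_V] cont_V]
    by (simp add: D_def[abs_def])
  show "(\<lambda>n. D n y) \<longlonglongrightarrow> indicator U y * F' y" for y
  proof (cases "y \<in> U")
    case True
    have t: "filterlim t (at 0) sequentially"
      using LIMSEQ_inverse_real_of_nat by (auto simp: filterlim_at t_def[abs_def])
    have "(\<lambda>n. y + t n) \<longlonglongrightarrow> y + 0"
      using t by (intro tendsto_add tendsto_const) (simp add: filterlim_at)
    then have "\<forall>\<^sub>F n in sequentially. y + t n \<in> U"
      using \<open>open U\<close> True by (intro topological_tendstoD) auto
    then have "\<forall>\<^sub>F n in sequentially. (F (y + t n) - F y) / t n = D n y"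
      by eventually_elim (simp add: D_def V_def True)
    moreover have "(\<lambda>n. (F (y + t n) - F y) / t n) \<longlonglongrightarrow> F' y"
      using filterlim_compose[OF der[OF True, unfolded DERIV_def] t] by simp
    ultimately show ?thesis
      using True by (simp add: Lim_transform_eventually)
  qed (simp add: D_def V_def)
qed

lemma abs_le_one_plus_power2: "\<bar>x\<bar> \<le> 1 + (x::real)\<^sup>2"
proof (cases "\<bar>x\<bar> \<le> 1")
  case True
  then show ?thesis
    using zero_le_power2[of x] by linarith
next
  case False
  then have "\<bar>x\<bar> * 1 \<le> \<bar>x\<bar> * \<bar>x\<bar>"
    by (intro mult_left_mono) auto
  then show ?thesis
    by (simp add: power2_eq_square abs_mult_self_eq)
qed

lemma twice_differentiable_onD:
  assumes "twice_differentiable_on f S" and "y \<in> S"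
  shows "(f has_real_derivative deriv f y) (at y)"
    and "(deriv f has_real_derivative deriv (deriv f) y) (at y)"
  using assms by (simp_all add: twice_differentiable_on_def DERIV_deriv_iff_real_differentiable)

section \<open>Quadratic functions of a standard normal variable\<close>

locale quadratic =
  fixes a b c :: real
  assumes nondegenerate: "a \<noteq> 0 \<or> b \<noteq> 0"
begin

definition q :: "real \<Rightarrow> real" where
  "q x = a * x\<^sup>2 + b * x + c"

text \<open>For \<open>a = 0\<close> this is the junk value \<open>0\<close>; then \<open>q' = b\<close> never vanishes and
  no point is exceptional.\<close>

definition vertex :: real where
  "vertex = - b / (2 * a)"

lemma has_real_derivative_q: "(q has_real_derivative 2 * a * z + b) (at z)"
  unfolding q_def[abs_def] by (auto intro!: derivative_eq_intros)

lemma continuous_on_q: "continuous_on UNIV q"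
  unfolding q_def[abs_def] by (intro continuous_intros)

lemma borel_measurable_q: "q \<in> borel_measurable borel"
  using continuous_on_q by (rule borel_measurable_continuous_onI)

lemma q_deriv_nonzero:
  assumes "z \<noteq> vertex \<or> a = 0"
  shows "2 * a * z + b \<noteq> 0"
proof (cases "a = 0")
  case True
  with nondegenerate show ?thesis
    by simp
next
  case False
  with assms show ?thesis
    by (auto simp: vertex_def field_simps)
qed

lemma q_in_interior_range: "z \<noteq> vertex \<or> a = 0 \<Longrightarrow> q z \<in> interior (range q)"
  using continuous_on_q has_real_derivative_q q_deriv_nonzero
  by (rule interior_range_if_has_real_derivative_nonzero)

lemma q_reflect: "a \<noteq> 0 \<Longrightarrow> q (2 * vertex - z) = q z"
  by (simp add: q_def vertex_def field_simps power2_eq_square)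

lemma q_deriv_eq: "a \<noteq> 0 \<Longrightarrow> 2 * a * z + b = 2 * a * (z - vertex)"
  by (simp add: vertex_def field_simps)

lemma abs_le_const_times_q: "\<exists>K \<ge> 0. \<forall>z. \<bar>z\<bar> \<le> K * (1 + \<bar>q z\<bar>)"
proof (cases "a = 0")
  case True
  with nondegenerate have "b \<noteq> 0"
    by simp
  have "\<bar>z\<bar> \<le> (1 + \<bar>c\<bar>) / \<bar>b\<bar> * (1 + \<bar>q z\<bar>)" for z
  proof -
    have "\<bar>b\<bar> * \<bar>z\<bar> = \<bar>q z - c\<bar>"
      unfolding q_def using True by (simp add: abs_mult)
    also have "\<dots> \<le> \<bar>q z\<bar> + \<bar>c\<bar> + \<bar>c\<bar> * \<bar>q z\<bar> + 1"
      using abs_triangle_ineq4[of "q z" c] mult_nonneg_nonneg[OF abs_ge_zero abs_ge_zero, of c "q z"]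
      by linarith
    also have "\<dots> = (1 + \<bar>c\<bar>) * (1 + \<bar>q z\<bar>)"
      by (simp add: algebra_simps)
    finally show ?thesis
      using \<open>b \<noteq> 0\<close> by (simp add: field_simps)
  qed
  moreover have "(1 + \<bar>c\<bar>) / \<bar>b\<bar> \<ge> 0"
    by simp
  ultimately show ?thesis
    by blast
next
  case False
  define m where "m = c - b\<^sup>2 / (4 * a)"
  define K where "K = \<bar>vertex\<bar> + 1 + (1 + \<bar>m\<bar>) / \<bar>a\<bar>"
  have "\<bar>z\<bar> \<le> K * (1 + \<bar>q z\<bar>)" for z
  proof -
    have "q z - m = a * (z - vertex)\<^sup>2"
      using False by (simp add: q_def m_def vertex_def field_simps power2_eq_square)
    then have "\<bar>a\<bar> * (z - vertex)\<^sup>2 = \<bar>q z - m\<bar>"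
      by (simp add: abs_mult)
    also have "\<dots> \<le> \<bar>q z\<bar> + \<bar>m\<bar>"
      by linarith
    finally have "(z - vertex)\<^sup>2 \<le> (\<bar>q z\<bar> + \<bar>m\<bar>) / \<bar>a\<bar>"
      using False by (simp add: field_simps)
    moreover have "\<bar>z - vertex\<bar> \<le> 1 + (z - vertex)\<^sup>2"
      by (rule abs_le_one_plus_power2)
    ultimately have "\<bar>z - vertex\<bar> \<le> 1 + (\<bar>q z\<bar> + \<bar>m\<bar>) / \<bar>a\<bar>"
      by linarith
    then have "\<bar>z\<bar> \<le> \<bar>vertex\<bar> + 1 + (\<bar>q z\<bar> + \<bar>m\<bar>) / \<bar>a\<bar>"
      using abs_triangle_ineq[of vertex "z - vertex"] by simp
    also have "\<dots> \<le> K * (1 + \<bar>q z\<bar>)"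
      using False by (simp add: K_def field_simps)
    finally show ?thesis .
  qed
  moreover have "K \<ge> 0"
    by (simp add: K_def)
  ultimately show ?thesis
    by blast
qed

lemma borel_measurable_comp_q:
  fixes G :: "real \<Rightarrow> real"
  assumes "(\<lambda>y. indicator (interior (range q)) y * G y) \<in> borel_measurable borel"
  shows "(\<lambda>z. G (q z)) \<in> borel_measurable borel"
proof -
  have [measurable]: "(\<lambda>z. indicator (interior (range q)) (q z) * G (q z)) \<in> borel_measurable borel"
    using measurable_compose[OF borel_measurable_q assms] by simp
  have "(\<lambda>z. G (q z)) = (\<lambda>z. if z = vertex then G (q vertex)
      else indicator (interior (range q)) (q z) * G (q z))"
  proof
    show "G (q z) = (if z = vertex then G (q vertex)
        else indicator (interior (range q)) (q z) * G (q z))" for z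
      by (cases "z = vertex") (simp_all add: q_in_interior_range indicator_def)
  qed
  also have "\<dots> \<in> borel_measurable borel"
    by measurable
  finally show ?thesis .
qed

lemma borel_measurable_comp_q_if_has_derivative:
  fixes G G' :: "real \<Rightarrow> real"
  assumes der: "\<And>y. y \<in> interior (range q) \<Longrightarrow> (G has_real_derivative G' y) (at y)"
  shows "(\<lambda>z. G (q z)) \<in> borel_measurable borel" "(\<lambda>z. G' (q z)) \<in> borel_measurable borel"
proof -
  have "continuous_on (interior (range q)) G"
    using der by (intro continuous_at_imp_continuous_on ballI DERIV_isCont) auto
  then show "(\<lambda>z. G (q z)) \<in> borel_measurable borel"
    using borel_measurable_continuous_on_indicator[of "interior (range q)" G]
    by (intro borel_measurable_comp_q) simp
  show "(\<lambda>z. G' (q z)) \<in> borel_measurable borel"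
    using der by (intro borel_measurable_comp_q borel_measurable_indicator_times_derivative) auto
qed

text \<open>The hypotheses \<open>E |G(X)| < \<infinity>\<close> and \<open>E |X G(X)| < \<infinity>\<close>, read through the
  density of \<open>Z\<close>.\<close>

definition q_integrable :: "(real \<Rightarrow> real) \<Rightarrow> bool" where
  "q_integrable G \<longleftrightarrow>
     integrable lborel (\<lambda>z. \<phi> z * G (q z)) \<and> integrable lborel (\<lambda>z. \<phi> z * (q z * G (q z)))"

lemma q_integrableD:
  assumes "q_integrable G" and meas: "(\<lambda>z. G (q z)) \<in> borel_measurable borel"
  shows "integrable lborel (\<lambda>z. \<phi> z * G (q z))" "integrable lborel (\<lambda>z. \<phi> z * (q z * G (q z)))"
    and "integrable lborel (\<lambda>z. \<phi> z * (z * G (q z)))"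
proof -
  show int: "integrable lborel (\<lambda>z. \<phi> z * G (q z))" "integrable lborel (\<lambda>z. \<phi> z * (q z * G (q z)))"
    using \<open>q_integrable G\<close> by (simp_all add: q_integrable_def)
  obtain K where "K \<ge> 0" and K: "\<And>z. \<bar>z\<bar> \<le> K * (1 + \<bar>q z\<bar>)"
    using abs_le_const_times_q by blast
  show "integrable lborel (\<lambda>z. \<phi> z * (z * G (q z)))"
  proof (rule Bochner_Integration.integrable_bound)
    show "integrable lborel (\<lambda>z. K * (\<bar>\<phi> z * G (q z)\<bar> + \<bar>\<phi> z * (q z * G (q z))\<bar>))"
      using int by auto
    show "(\<lambda>z. \<phi> z * (z * G (q z))) \<in> borel_measurable lborel"
      unfolding measurable_lborel2
      by (intro borel_measurable_times borel_measurable_normal_density measurable_ident_sets[OF refl] meas)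
    show "AE z in lborel. norm (\<phi> z * (z * G (q z)))
        \<le> norm (K * (\<bar>\<phi> z * G (q z)\<bar> + \<bar>\<phi> z * (q z * G (q z))\<bar>))"
    proof (rule AE_I2)
      fix z
      have "norm (\<phi> z * (z * G (q z))) = \<bar>z\<bar> * (\<phi> z * \<bar>G (q z)\<bar>)"
        by (simp add: abs_mult)
      also have "\<dots> \<le> K * (1 + \<bar>q z\<bar>) * (\<phi> z * \<bar>G (q z)\<bar>)"
        by (intro mult_right_mono K) simp
      also have "\<dots> = norm (K * (\<bar>\<phi> z * G (q z)\<bar> + \<bar>\<phi> z * (q z * G (q z))\<bar>))"
        using \<open>K \<ge> 0\<close> by (simp add: abs_mult algebra_simps)
      finally show "norm (\<phi> z * (z * G (q z)))
          \<le> norm (K * (\<bar>\<phi> z * G (q z)\<bar> + \<bar>\<phi> z * (q z * G (q z))\<bar>))" .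
    qed
  qed
qed

lemma stein_identity_comp_q:
  assumes der: "\<And>y. y \<in> interior (range q) \<Longrightarrow> (G has_real_derivative G' y) (at y)"
    and "q_integrable G" "q_integrable G'"
  shows "has_bochner_integral lborel (\<lambda>z. \<phi> z * (z * G (q z) - (2 * a * z + b) * G' (q z))) 0"
proof (rule std_normal_stein_identity_off_point)
  note int_G = q_integrableD[OF \<open>q_integrable G\<close> borel_measurable_comp_q_if_has_derivative(1)[OF der]]
  note int_G' = q_integrableD[OF \<open>q_integrable G'\<close> borel_measurable_comp_q_if_has_derivative(2)[OF der]]
  have der_comp: "((\<lambda>z. G (q z)) has_real_derivative (2 * a * z + b) * G' (q z)) (at z)"
    if "z \<noteq> vertex \<or> a = 0" for z
    using DERIV_chain2[OF der[OF q_in_interior_range[OF that]] has_real_derivative_q] by (simp add: mult.commute)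
  then show "((\<lambda>z. G (q z)) has_real_derivative (2 * a * z + b) * G' (q z)) (at z)" if "z \<noteq> vertex" for z
    using that by blast
  show "integrable lborel (\<lambda>z. \<phi> z * G (q z))" "integrable lborel (\<lambda>z. \<phi> z * (z * G (q z)))"
    using int_G by simp_all
  have "integrable lborel (\<lambda>z. 2 * a * (\<phi> z * (z * G' (q z))) + b * (\<phi> z * G' (q z)))"
    using int_G' by simp
  then show "integrable lborel (\<lambda>z. \<phi> z * ((2 * a * z + b) * G' (q z)))"
    by (simp add: algebra_simps)
  show "L = L'" if "((\<lambda>z. G (q z)) \<longlongrightarrow> L) (at_left vertex)"
    and "((\<lambda>z. G (q z)) \<longlongrightarrow> L') (at_right vertex)" for L L'
  proof (cases "a = 0")
    case True
    then show ?thesis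
      using that der_comp[THEN DERIV_isCont] by (intro one_sided_limits_eq_if_isCont[OF _ that]) simp
  next
    case False
    then show ?thesis
      by (intro one_sided_limits_eq_if_symmetric[OF _ that]) (simp add: q_reflect)
  qed
qed

lemma stein_identity_deriv_times_comp_q:
  assumes der: "\<And>y. y \<in> interior (range q) \<Longrightarrow> (G has_real_derivative G' y) (at y)"
    and "q_integrable G" "q_integrable G'"
  shows "has_bochner_integral lborel
    (\<lambda>z. \<phi> z * (z * ((2 * a * z + b) * G (q z)) - (2 * a * G (q z) + (2 * a * z + b)\<^sup>2 * G' (q z)))) 0"
proof (rule std_normal_stein_identity_off_point)
  note int_G = q_integrableD[OF \<open>q_integrable G\<close> borel_measurable_comp_q_if_has_derivative(1)[OF der]]
  note int_G' = q_integrableD[OF \<open>q_integrable G'\<close> borel_measurable_comp_q_if_has_derivative(2)[OF der]]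
  have der_comp: "((\<lambda>z. (2 * a * z + b) * G (q z)) has_real_derivative
      2 * a * G (q z) + (2 * a * z + b)\<^sup>2 * G' (q z)) (at z)" if "z \<noteq> vertex \<or> a = 0" for z
    by (rule derivative_eq_intros DERIV_chain2[OF der[OF q_in_interior_range[OF that]] has_real_derivative_q]
        refl)+ (simp add: power2_eq_square algebra_simps)
  then show "((\<lambda>z. (2 * a * z + b) * G (q z)) has_real_derivative
      2 * a * G (q z) + (2 * a * z + b)\<^sup>2 * G' (q z)) (at z)" if "z \<noteq> vertex" for z
    using that by blast
  have "integrable lborel (\<lambda>z. 2 * a * (\<phi> z * (z * G (q z))) + b * (\<phi> z * G (q z)))"
    using int_G by simp
  then show "integrable lborel (\<lambda>z. \<phi> z * ((2 * a * z + b) * G (q z)))"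
    by (simp add: algebra_simps)
  have "integrable lborel (\<lambda>z. 2 * (\<phi> z * (q z * G (q z))) - 2 * c * (\<phi> z * G (q z))
      - b * (\<phi> z * (z * G (q z))))"
    using int_G by simp
  then show "integrable lborel (\<lambda>z. \<phi> z * (z * ((2 * a * z + b) * G (q z))))"
    by (simp add: q_def algebra_simps power2_eq_square)
  have "integrable lborel (\<lambda>z. 2 * a * (\<phi> z * G (q z)) + 4 * a * (\<phi> z * (q z * G' (q z)))
      + (b\<^sup>2 - 4 * a * c) * (\<phi> z * G' (q z)))"
    using int_G int_G' by simp
  then show "integrable lborel (\<lambda>z. \<phi> z * (2 * a * G (q z) + (2 * a * z + b)\<^sup>2 * G' (q z)))"
    by (simp add: q_def algebra_simps power2_eq_square)
  show "L = L'" if "((\<lambda>z. (2 * a * z + b) * G (q z)) \<longlongrightarrow> L) (at_left vertex)"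
    "((\<lambda>z. (2 * a * z + b) * G (q z)) \<longlongrightarrow> L') (at_right vertex)" for L L'
  proof (cases "a = 0")
    case True
    then show ?thesis
      using der_comp[THEN DERIV_isCont] by (intro one_sided_limits_eq_if_isCont[OF _ that]) simp
  next
    case False
    show ?thesis
    proof (rule one_sided_limits_eq_if_antisymmetric[OF _ _ _ that])
      show "(2 * a * z + b) * G (q z) = (z - vertex) * (2 * a * G (q z))" for z
        using q_deriv_eq[OF False, of z] by simp
      show "2 * a * G (q (2 * vertex - z)) = 2 * a * G (q z)" for z
        using q_reflect[OF False] by simp
      show "integrable lborel (\<lambda>z. \<phi> z * (2 * a * G (q z)))"
        using int_G(1) by (simp add: algebra_simps)
    qed
  qed
qed

definition stein_operator :: "(real \<Rightarrow> real) \<Rightarrow> real \<Rightarrow> real" where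
  "stein_operator f x =
     (a * b\<^sup>2 + 4 * a\<^sup>2 * (x - c)) * (deriv ^^ 2) f x
     + (2 * a\<^sup>2 - b\<^sup>2 - 4 * a * (x - c)) * deriv f x + (x - c - a) * f x"

lemma borel_measurable_comp_q_deriv_funpow:
  assumes "twice_differentiable_on f (interior (range q))" and "k \<le> 2"
  shows "(\<lambda>z. (deriv ^^ k) f (q z)) \<in> borel_measurable borel"
proof -
  have "k = 0 \<or> k = 1 \<or> k = 2"
    using assms(2) by auto
  then show ?thesis
    using borel_measurable_comp_q_if_has_derivative[OF twice_differentiable_onD(1)[OF assms(1)]]
      borel_measurable_comp_q_if_has_derivative[OF twice_differentiable_onD(2)[OF assms(1)]]
    by (auto simp: numeral_2_eq_2)
qed

lemma borel_measurable_stein_operator_comp_q: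
  assumes "twice_differentiable_on f (interior (range q))"
  shows "(\<lambda>z. stein_operator f (q z)) \<in> borel_measurable borel"
  using borel_measurable_comp_q_deriv_funpow[OF assms, of 0] borel_measurable_comp_q_deriv_funpow[OF assms, of 1]
    borel_measurable_comp_q_deriv_funpow[OF assms, of 2] borel_measurable_q
  by (simp add: stein_operator_def)

lemma has_bochner_integral_stein_operator:
  assumes twice: "twice_differentiable_on f (interior (range q))"
    and int: "\<And>k. k \<le> 2 \<Longrightarrow> q_integrable ((deriv ^^ k) f)"
  shows "has_bochner_integral lborel (\<lambda>z. \<phi> z * stein_operator f (q z)) 0"
proof -
  have int': "q_integrable f" "q_integrable (deriv f)" "q_integrable (deriv (deriv f))"
    using int[of 0] int[of 1] int[of 2] by (simp_all add: numeral_2_eq_2)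
  note odd_f = stein_identity_deriv_times_comp_q[OF twice_differentiable_onD(1)[OF twice] int'(1,2)]
  note even_f = stein_identity_comp_q[OF twice_differentiable_onD(1)[OF twice] int'(1,2)]
  note odd_f' = stein_identity_deriv_times_comp_q[OF twice_differentiable_onD(2)[OF twice] int'(2,3)]
  txt \<open>The combination is twice the operator, as \<open>(2 a z + b)\<^sup>2 = 4 a (q z - c) + b\<^sup>2\<close>.\<close>
  have "has_bochner_integral lborel (\<lambda>z.
      (\<phi> z * (z * ((2 * a * z + b) * f (q z)) - (2 * a * f (q z) + (2 * a * z + b)\<^sup>2 * deriv f (q z))))
      + b * (\<phi> z * (z * f (q z) - (2 * a * z + b) * deriv f (q z)))
      - 2 * a * (\<phi> z * (z * ((2 * a * z + b) * deriv f (q z))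
          - (2 * a * deriv f (q z) + (2 * a * z + b)\<^sup>2 * deriv (deriv f) (q z)))))
      (0 + b * 0 - 2 * a * 0)"
    by (intro has_bochner_integral_diff has_bochner_integral_add has_bochner_integral_mult_right
        odd_f even_f odd_f')
  then have "has_bochner_integral lborel (\<lambda>z. 2 * (\<phi> z * stein_operator f (q z))) 0"
    by (rule has_bochner_integral_cong[THEN iffD1, rotated -1])
      (simp_all add: stein_operator_def q_def numeral_2_eq_2 algebra_simps power2_eq_square)
  from has_bochner_integral_divide_zero[OF this, of 2] show ?thesis
    by simp
qed

end

theorem proposition2p1:
  fixes M :: "'s measure" and Z :: "'s \<Rightarrow> real" and a b c :: real and f :: "real \<Rightarrow> real"
  assumes "prob_space M"
    and "distributed M lborel Z std_normal_density"
    and "twice_differentiable_on f (interior (range (\<lambda>x::real. a * x\<^sup>2 + b * x + c)))"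
    and "\<And>k. k \<le> 2 \<Longrightarrow>
           integrable M (\<lambda>\<omega>. (a * (Z \<omega>)\<^sup>2 + b * Z \<omega> + c) * (deriv ^^ k) f (a * (Z \<omega>)\<^sup>2 + b * Z \<omega> + c))"
    and "\<And>k. k \<le> 2 \<Longrightarrow>
           integrable M (\<lambda>\<omega>. (deriv ^^ k) f (a * (Z \<omega>)\<^sup>2 + b * Z \<omega> + c))"
  shows "(\<integral>\<omega>. (let X = a * (Z \<omega>)\<^sup>2 + b * Z \<omega> + c in
            (a * b\<^sup>2 + 4 * a\<^sup>2 * (X - c)) * (deriv ^^ 2) f X
          + (2 * a\<^sup>2 - b\<^sup>2 - 4 * a * (X - c)) * deriv f X
          + (X - c - a) * f X) \<partial>M) = 0"
proof (cases "a = 0 \<and> b = 0")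
  case True
  then show ?thesis
    by (simp add: Let_def)
next
  case False
  then interpret quadratic a b c
    by unfold_locales simp
  have q_eq: "(\<lambda>x. a * x\<^sup>2 + b * x + c) = q"
    by (simp add: fun_eq_iff q_def)
  have twice: "twice_differentiable_on f (interior (range q))"
    using assms(3) unfolding q_eq .
  have "q_integrable ((deriv ^^ k) f)" if "k \<le> 2" for k
    using assms(4,5)[OF that] borel_measurable_comp_q_deriv_funpow[OF twice that] borel_measurable_q
    by (simp add: q_integrable_def q_def[symmetric] distributed_integrable[OF assms(2)])
  then have "has_bochner_integral lborel (\<lambda>z. \<phi> z * stein_operator f (q z)) 0"
    by (rule has_bochner_integral_stein_operator[OF twice])
  moreover have "(\<integral>\<omega>. stein_operator f (q (Z \<omega>)) \<partial>M)
      = (\<integral>z. \<phi> z * stein_operator f (q z) \<partial>lborel)"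
    using distributed_integral[OF assms(2), of "\<lambda>z. stein_operator f (q z)"]
      borel_measurable_stein_operator_comp_q[OF twice] by simp
  ultimately have "(\<integral>\<omega>. stein_operator f (q (Z \<omega>)) \<partial>M) = 0"
    by (simp add: has_bochner_integral_integral_eq)
  then show ?thesis
    by (simp add: stein_operator_def q_def Let_def)
qed

end
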